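(* Let $n\ge1$, $U_n$ the family of bounded subsets of $\mathbb R^n$, and let $\mu:U_n\to B_2$ be a measure that is derivable on the closed set $A\in U_n$ (so $A$ is compact). Then the set $\mathrm{supp}_A\, d\mu=\{x\in A: d\mu(x)=1\}$ is finite.
   Context: $B_2=\{0,1\}$. $\mu:U_n\to B_2$ is a measure if for every sequence $(A_p)$ of pairwise disjoint sets of $U_n$ with $\bigcup_pA_p\in U_n$, the set $\{p:\mu(A_p)=1\}$ is finite and $\mu(\bigcup_pA_p)$ equals the number of such $p$ modulo 2. For bounded $B$, $d(B)=\sup_{x,y\in B}\|x-y\|$ (Euclidean). $\mu$ is derivable at $x\in A$ (where $A\in U_n$) if there exist $\varepsilon>0$ and $a\in B_2$ such that for all $B\in U_n$ with $x\in B$ and $d(B)<\varepsilon$, $\mu(B)=a$; this $a$ (necessarily $a=\mu(\{x\})$) is the derivative $d\mu(x)$. $\mu$ is derivable on $A$ if it is derivable at every $x\in A$. *)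

theory Defs
  imports "HOL-Analysis.Analysis"
begin

text \<open>U_n = bounded subsets of the Euclidean space 'a (of dimension n = DIM('a) \<ge> 1).
  B_2 = {0,1} is represented by the naturals 0 and 1.\<close>

definition B2_measure :: "('a::euclidean_space set \<Rightarrow> nat) \<Rightarrow> bool" where
  "B2_measure \<mu> \<longleftrightarrow>
     (\<forall>B. bounded B \<longrightarrow> \<mu> B \<in> {0, 1}) \<and>
     (\<forall>A :: nat \<Rightarrow> 'a set.
        (\<forall>p. bounded (A p)) \<and> disjoint_family A \<and> bounded (\<Union>p. A p) \<longrightarrow>
          finite {p. \<mu> (A p) = 1} \<and> \<mu> (\<Union>p. A p) = card {p. \<mu> (A p) = 1} mod 2)"

definition derivable_at :: "('a::euclidean_space set \<Rightarrow> nat) \<Rightarrow> 'a \<Rightarrow> bool" where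
  "derivable_at \<mu> x \<longleftrightarrow>
     (\<exists>\<epsilon>>0. \<exists>a\<in>{0, 1}. \<forall>B. bounded B \<and> x \<in> B \<and> diameter B < \<epsilon> \<longrightarrow> \<mu> B = a)"

definition measure_deriv :: "('a::euclidean_space set \<Rightarrow> nat) \<Rightarrow> 'a \<Rightarrow> nat" where
  "measure_deriv \<mu> x =
     (THE a. a \<in> {0, 1} \<and> (\<exists>\<epsilon>>0. \<forall>B. bounded B \<and> x \<in> B \<and> diameter B < \<epsilon> \<longrightarrow> \<mu> B = a))"

definition derivable_on :: "('a::euclidean_space set \<Rightarrow> nat) \<Rightarrow> 'a set \<Rightarrow> bool" where
  "derivable_on \<mu> A \<longleftrightarrow> (\<forall>x\<in>A. derivable_at \<mu> x)"

end

theory Submission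
  imports Defs
begin

text \<open>The derivative at a point x is the value of \<mu> on the singleton {x}, since {x} has
  diameter 0. If infinitely many points of the bounded set A had \<mu>{x} = 1, countably many of
  them would form a disjoint family of singletons with bounded union in which infinitely many
  members have measure 1, contradicting the additivity axiom.\<close>

lemma measure_deriv_eq_singleton:
  assumes "derivable_at \<mu> x"
  shows "measure_deriv \<mu> x = \<mu> {x}"
proof -
  obtain \<epsilon> a where "\<epsilon> > 0" "a \<in> {0, 1}"
    and a: "\<forall>B. bounded B \<and> x \<in> B \<and> diameter B < \<epsilon> \<longrightarrow> \<mu> B = a"
    using assms unfolding derivable_at_def by blast
  have "\<mu> {x} = a"
    using a \<open>\<epsilon> > 0\<close> by auto
  have "(THE a. a \<in> {0, 1} \<and> (\<exists>\<epsilon>>0. \<forall>B. bounded B \<and> x \<in> B \<and> diameter B < \<epsilon> \<longrightarrow> \<mu> B = a)) = a"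
  proof (rule the_equality)
    show "a \<in> {0, 1} \<and> (\<exists>\<epsilon>>0. \<forall>B. bounded B \<and> x \<in> B \<and> diameter B < \<epsilon> \<longrightarrow> \<mu> B = a)"
      using \<open>\<epsilon> > 0\<close> \<open>a \<in> {0, 1}\<close> a by blast
  next
    fix b
    assume "b \<in> {0, 1} \<and> (\<exists>\<epsilon>>0. \<forall>B. bounded B \<and> x \<in> B \<and> diameter B < \<epsilon> \<longrightarrow> \<mu> B = b)"
    then obtain \<delta> where "\<delta> > 0"
      and "\<forall>B. bounded B \<and> x \<in> B \<and> diameter B < \<delta> \<longrightarrow> \<mu> B = b"
      by blast
    then have "\<mu> {x} = b"
      by auto
    then show "b = a"
      using \<open>\<mu> {x} = a\<close> by simp
  qed
  then show ?thesis
    unfolding measure_deriv_def using \<open>\<mu> {x} = a\<close> by simp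
qed

lemma B2_measure_finite_atoms:
  fixes \<mu> :: "'a::euclidean_space set \<Rightarrow> nat"
  assumes "B2_measure \<mu>" and "bounded S"
  shows "finite {x \<in> S. \<mu> {x} = 1}"
proof (rule ccontr)
  assume "infinite {x \<in> S. \<mu> {x} = 1}"
  then obtain f :: "nat \<Rightarrow> 'a" where "inj f" and f_atoms: "range f \<subseteq> {x \<in> S. \<mu> {x} = 1}"
    using infinite_countable_subset by blast
  have "(\<Union>p. {f p}) \<subseteq> S"
    using f_atoms by auto
  then have "bounded (\<Union>p. {f p})"
    using \<open>bounded S\<close> bounded_subset by blast
  moreover have "disjoint_family (\<lambda>p. {f p})"
    using \<open>inj f\<close> unfolding disjoint_family_on_def inj_def by auto
  ultimately have "finite {p. \<mu> {f p} = 1}"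
    using assms(1) unfolding B2_measure_def by auto
  moreover have "\<mu> {f p} = 1" for p
    using f_atoms by auto
  ultimately show False
    by simp
qed

theorem theorem5p13:
  fixes \<mu> :: "'a::euclidean_space set \<Rightarrow> nat" and A :: "'a set"
  assumes "B2_measure \<mu>" and "bounded A" and "closed A" and "derivable_on \<mu> A"
  shows "finite {x \<in> A. measure_deriv \<mu> x = 1}"
proof -
  have "measure_deriv \<mu> x = \<mu> {x}" if "x \<in> A" for x
    using \<open>derivable_on \<mu> A\<close> that measure_deriv_eq_singleton unfolding derivable_on_def by blast
  then have "{x \<in> A. measure_deriv \<mu> x = 1} = {x \<in> A. \<mu> {x} = 1}"
    by auto
  then show ?thesis
    using B2_measure_finite_atoms[OF \<open>B2_measure \<mu>\<close> \<open>bounded A\<close>] by simp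
qed

end
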